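(* Let $k\geq 1$ and $n\geq 2$ be integers and let $r$ be an integer with $0\leq r\leq n$. Then \[C_{k,n+r}C_{k,n-r}-C_{k,n}^2=8(k-1)^{n-r+1}\,B_{k,r}^2.\]
   Context: For an integer $k\geq 1$, the generalized balancing numbers are defined by $B_{k,0}=0$, $B_{k,1}=1$ and $B_{k,n}=3kB_{k,n-1}+(1-k)B_{k,n-2}$ for $n\geq 2$; the generalized balancing-Lucas numbers are defined by $C_{k,0}=1$, $C_{k,1}=3$ and $C_{k,n}=3kC_{k,n-1}+(1-k)C_{k,n-2}$ for $n\geq 2$. *)

theory Defs
  imports Main
begin

fun genB :: "int \<Rightarrow> nat \<Rightarrow> int" where
  "genB k 0 = 0"
| "genB k (Suc 0) = 1"
| "genB k (Suc (Suc n)) = 3 * k * genB k (Suc n) + (1 - k) * genB k n"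

fun genC :: "int \<Rightarrow> nat \<Rightarrow> int" where
  "genC k 0 = 1"
| "genC k (Suc 0) = 3"
| "genC k (Suc (Suc n)) = 3 * k * genC k (Suc n) + (1 - k) * genC k n"

end

theory Submission
  imports Defs
begin

(* Both sides of the general identity genC_vajda satisfy the defining recurrence in s, so it
   reduces to s = 1; that case satisfies the recurrence in r and reduces to the Cassini identity,
   which holds because each step multiplies the Casoratian C_m C_(m+2) - C_(m+1)^2 by
   k - 1 = -(1 - k). The theorem is the case m = n - r, s = r. *)

lemma genC_cassini:
  "genC k m * genC k (Suc (Suc m)) - (genC k (Suc m))^2 = 8 * (k - 1) ^ Suc m"
proof (induction m)
  case 0
  show ?case by (simp add: power2_eq_square)
next
  case (Suc m)
  have "genC k (Suc m) * genC k (Suc (Suc (Suc m))) - (genC k (Suc (Suc m)))^2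
      = (k - 1) * (genC k m * genC k (Suc (Suc m)) - (genC k (Suc m))^2)"
    by (simp add: algebra_simps power2_eq_square)
  with Suc.IH show ?case by simp
qed

lemma genC_docagne:
  "genC k m * genC k (Suc (m + r)) - genC k (m + r) * genC k (Suc m)
     = 8 * (k - 1) ^ Suc m * genB k r"
proof (induction r rule: induct_nat_012)
  case 0
  show ?case by simp
next
  case 1
  show ?case using genC_cassini[of k m] by (simp add: power2_eq_square)
next
  case (ge2 r)
  have "genC k m * genC k (Suc (m + Suc (Suc r))) - genC k (m + Suc (Suc r)) * genC k (Suc m)
      = 3 * k * (genC k m * genC k (Suc (m + Suc r)) - genC k (m + Suc r) * genC k (Suc m))
        + (1 - k) * (genC k m * genC k (Suc (m + r)) - genC k (m + r) * genC k (Suc m))"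
    by (simp add: algebra_simps)
  also have "\<dots> = 8 * (k - 1) ^ Suc m * (3 * k * genB k (Suc r) + (1 - k) * genB k r)"
    by (simp only: ge2) (simp add: algebra_simps)
  finally show ?case by simp
qed

lemma genC_vajda:
  "genC k m * genC k (m + r + s) - genC k (m + r) * genC k (m + s)
     = 8 * (k - 1) ^ Suc m * genB k r * genB k s"
proof (induction s rule: induct_nat_012)
  case 0
  show ?case by simp
next
  case 1
  show ?case using genC_docagne[of k m r] by (simp add: algebra_simps)
next
  case (ge2 s)
  have "genC k m * genC k (m + r + Suc (Suc s)) - genC k (m + r) * genC k (m + Suc (Suc s))
      = 3 * k * (genC k m * genC k (m + r + Suc s) - genC k (m + r) * genC k (m + Suc s))
        + (1 - k) * (genC k m * genC k (m + r + s) - genC k (m + r) * genC k (m + s))"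
    by (simp add: algebra_simps)
  also have "\<dots> = 8 * (k - 1) ^ Suc m * genB k r * (3 * k * genB k (Suc s) + (1 - k) * genB k s)"
    by (simp only: ge2) (simp add: algebra_simps)
  finally show ?case by simp
qed

theorem mainTheorem4:
  fixes k :: int and n r :: nat
  assumes "k \<ge> 1" and "n \<ge> 2" and "r \<le> n"
  shows "genC k (n + r) * genC k (n - r) - (genC k n)^2
           = 8 * (k - 1) ^ (n - r + 1) * (genB k r)^2"
proof -
  obtain m where n: "n = m + r"
    using \<open>r \<le> n\<close> by (metis le_add_diff_inverse2)
  show ?thesis
    using genC_vajda[of k m r r] by (simp add: n power2_eq_square algebra_simps)
qed

end
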